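(* Let $Z(t)=\sum_{k=1}^{N(t)}X_k$ be a compound Poisson process whose iid jumps $X_k$ have a light right tail, and let $B(1)$ be a standard normal random variable independent of $Z$. Then $$\lim_{u\to\infty}\frac{P\big(B(1)+\sup_{0\le t\le1}Z(t)>u\big)}{P(B(1)+Z(1)>u)}=1.$$
   Context: A random variable $X$ has a light right tail if either (i) $P(X>u)>0$ for all $u>0$ and $\lim_{u\to\infty}P(X_1>u)/P(X_1+X_2>u)=0$, where $X_1,X_2$ are independent copies of $X$; or (ii) there are constants $A>0,\alpha>0$ with $X\le A$ a.s. and $P(X>\alpha)>0$. A compound Poisson process has $N$ a Poisson process independent of the iid jumps. *)

theory Defs
  imports "HOL-Probability.Probability"
begin

text \<open>Case (i): P(X>u) > 0 for all u > 0 and P(X1>u)/P(X1+X2>u) tends to 0,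
  where the law of X1+X2 for independent copies is the convolution D * D.\<close>
definition light_right_tail :: "real measure \<Rightarrow> bool" where
  "light_right_tail D \<longleftrightarrow>
     ((\<forall>u>0. measure D {u<..} > 0) \<and>
      ((\<lambda>u. measure D {u<..} / measure (D \<star> D) {u<..}) \<longlongrightarrow> 0) at_top)
   \<or> (\<exists>A>0. \<exists>\<alpha>>0. (AE x in D. x \<le> A) \<and> measure D {\<alpha><..} > 0)"

text \<open>Poisson process of rate l built from iid Exp(l) inter-arrival times T 0, T 1, ...:
  N t = number of n >= 1 with T 0 + ... + T (n-1) <= t.\<close>
definition poisson_count :: "(nat \<Rightarrow> 'a \<Rightarrow> real) \<Rightarrow> real \<Rightarrow> 'a \<Rightarrow> nat" where
  "poisson_count T t \<omega> = card {n. 1 \<le> n \<and> (\<Sum>i<n. T i \<omega>) \<le> t}"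

text \<open>Compound Poisson process Z(t) = sum_{k=1}^{N(t)} X_k (jumps indexed from 0 here).\<close>
definition compound_poisson :: "(nat \<Rightarrow> 'a \<Rightarrow> real) \<Rightarrow> (nat \<Rightarrow> 'a \<Rightarrow> real) \<Rightarrow> real \<Rightarrow> 'a \<Rightarrow> real" where
  "compound_poisson T X t \<omega> = (\<Sum>k<poisson_count T t \<omega>. X k \<omega>)"

definition driving_family :: "(nat \<Rightarrow> 'a \<Rightarrow> real) \<Rightarrow> (nat \<Rightarrow> 'a \<Rightarrow> real) \<Rightarrow> ('a \<Rightarrow> real)
    \<Rightarrow> nat + nat + unit \<Rightarrow> 'a \<Rightarrow> real" where
  "driving_family T X B i = (case i of Inl n \<Rightarrow> T n | Inr (Inl n) \<Rightarrow> X n | Inr (Inr _) \<Rightarrow> B)"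

end

theory Submission
  imports Defs "HOL-Probability.Probability" "HOL-Real_Asymp.Real_Asymp"
begin

(* Write N = N(1) (Poisson with mean l, weights pi_k), S_k = X_0 + ... + X_(k-1)
   and V_k = B + S_k, with tails a_k(u) = P(V_k > u).  The law of V_k is the standard normal
   law convolved k times with the jump law D.
   Denominator:  by independence of N and V_k,  Den(u) = P(B + Z(1) > u) = sum_k pi_k a_k(u).
   Numerator:    Z is a step function whose values on [0,1] are S_j for j <= N, hence
                 Num(u) <= sum_j P(N >= j) a_j(u); since P(N >= j) <= (1 + delta) pi_j for
                 large j, Num(u) <= sum_(k<K) a_k(u) + (1 + delta) Den(u).
   Negligibility: for every fixed k, a_k(u) = o(Den(u)).  This is proved by induction on k
                 from the Gaussian ratio a_0(u)/a_0(u-1) -> 0, the light-tail inequality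
                 P(X > y) <= eta P(X1 + X2 > y) for large y, and the shift bound
                 P(X > alpha)^m a_k(u - m alpha) <= a_(k+m)(u).
   Together with the trivial bound Den <= Num this forces Num/Den -> 1.
   The file first develops the measure-theoretic facts about tails of convolution powers,
   the Gaussian and Poisson estimates and an abstract ratio lemma, then sets up the compound
   Poisson model in a locale, and finally derives the theorem. *)


section \<open>Tails of convolutions of real probability measures\<close>

lemma emeasure_conv_tail:
  fixes \<nu> E :: "real measure"
  assumes "prob_space \<nu>" "prob_space E" "sets \<nu> = sets borel" "sets E = sets borel"
  shows "emeasure (\<nu> \<star> E) {x<..} = (\<integral>\<^sup>+v. ennreal (measure E {x - v<..}) \<partial>\<nu>)"
proof -
  interpret E: prob_space E by fact
  have sp: "space \<nu> = space borel" "space E = space borel"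
    using sets_eq_imp_space_eq[OF assms(3)] sets_eq_imp_space_eq[OF assms(4)] by auto
  have "emeasure (\<nu> \<star> E) {x<..} = (\<integral>\<^sup>+v. emeasure E {a. a + v \<in> {x<..}} \<partial>\<nu>)"
    using assms sp by (intro convolution_emeasure) (simp_all add: prob_space_def)
  also have "\<dots> = (\<integral>\<^sup>+v. ennreal (measure E {x - v<..}) \<partial>\<nu>)"
  proof (intro nn_integral_cong)
    fix v
    have "{a. a + v \<in> {x<..}} = {x - v<..}" by auto
    then show "emeasure E {a. a + v \<in> {x<..}} = ennreal (measure E {x - v<..})"
      by (simp add: E.emeasure_eq_measure)
  qed
  finally show ?thesis .
qed

lemma prob_space_convolution:
  fixes A B :: "real measure"
  assumes "prob_space A" "prob_space B" "sets A = sets borel" "sets B = sets borel"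
  shows "prob_space (A \<star> B)"
proof -
  interpret pair_prob_space A B
    using assms by (simp add: pair_prob_space_def pair_sigma_finite_def prob_space_imp_sigma_finite)
  have s: "sets (A \<Otimes>\<^sub>M B) = sets (borel \<Otimes>\<^sub>M borel)"
    using assms(3,4) by (intro sets_pair_measure_cong) auto
  have "(\<lambda>(x::real, y). x + y) \<in> borel_measurable (borel \<Otimes>\<^sub>M borel)" by measurable
  then have "(\<lambda>(x::real, y). x + y) \<in> borel_measurable (A \<Otimes>\<^sub>M B)"
    by (simp only: measurable_cong_sets[OF s refl])
  then show ?thesis unfolding convolution_def
    by (intro prob_space.prob_space_distr) (auto intro: P.prob_space_axioms)
qed

text \<open>Shift bound: with probability at least \<open>E{\<alpha><..}\<close> the second summand exceeds \<open>\<alpha>\<close>,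
  so \<open>E{\<alpha><..} \<cdot> \<nu>{x-\<alpha><..}\<close> is a lower bound for the tail of \<open>\<nu> \<star> E\<close> at \<open>x\<close>.\<close>
lemma measure_conv_tail_lower:
  fixes \<nu> E :: "real measure"
  assumes "prob_space \<nu>" "prob_space E" "sets \<nu> = sets borel" "sets E = sets borel"
  shows "measure E {\<alpha><..} * measure \<nu> {x - \<alpha><..} \<le> measure (\<nu> \<star> E) {x<..}"
proof -
  interpret \<nu>: prob_space \<nu> by fact
  interpret E: prob_space E by fact
  interpret conv: prob_space "\<nu> \<star> E" using assms by (rule prob_space_convolution)
  have "ennreal (measure E {\<alpha><..} * measure \<nu> {x - \<alpha><..}) =
     (\<integral>\<^sup>+v. ennreal (measure E {\<alpha><..}) * indicator {x - \<alpha><..} v \<partial>\<nu>)"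
    using assms(3) by (simp add: nn_integral_cmult_indicator \<nu>.emeasure_eq_measure ennreal_mult)
  also have "\<dots> \<le> (\<integral>\<^sup>+v. ennreal (measure E {x - v<..}) \<partial>\<nu>)"
  proof (intro nn_integral_mono)
    fix v
    have "x - \<alpha> < v \<Longrightarrow> measure E {\<alpha><..} \<le> measure E {x - v<..}"
      using assms(4) by (intro E.finite_measure_mono) auto
    then show "ennreal (measure E {\<alpha><..}) * indicator {x - \<alpha><..} v \<le> ennreal (measure E {x - v<..})"
      by (simp add: indicator_def)
  qed
  also have "\<dots> = ennreal (measure (\<nu> \<star> E) {x<..})"
    by (simp add: emeasure_conv_tail[OF assms, symmetric] conv.emeasure_eq_measure)
  finally show ?thesis by (simp add: ennreal_le_iff)
qed

lemma tail_measure_borel_measurable: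
  fixes E :: "real measure"
  assumes "prob_space E" "sets E = sets borel"
  shows "(\<lambda>v. measure E {x - v<..}) \<in> borel_measurable borel"
proof (rule borel_measurable_mono, rule monoI)
  fix v w :: real assume "v \<le> w"
  then show "measure E {x - v<..} \<le> measure E {x - w<..}"
    using assms by (intro finite_measure.finite_measure_mono[OF prob_space.finite_measure]) auto
qed


section \<open>Consequences of a light right tail\<close>

text \<open>The only point is that the denominator is positive, by the shift bound.\<close>
lemma tail_comparison_of_ratio:
  fixes D :: "real measure"
  assumes P: "prob_space D" and S: "sets D = sets borel"
    and pos: "\<forall>u>0. measure D {u<..} > 0"
    and lim: "((\<lambda>u. measure D {u<..} / measure (D \<star> D) {u<..}) \<longlongrightarrow> 0) at_top"
    and eta: "\<eta> > 0"
  shows "\<exists>s0. \<forall>y\<ge>s0. measure D {y<..} \<le> \<eta> * measure (D \<star> D) {y<..}"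
proof -
  interpret D: prob_space D by (rule P)
  have DD_pos: "0 < measure (D \<star> D) {y<..}" if "y \<ge> 1" for y
  proof -
    have "0 < measure D {1<..}" using pos by simp
    also have "\<dots> \<le> measure D {0<..}" using S by (intro D.finite_measure_mono) auto
    finally have "0 < measure D {0<..} * measure D {y - 0<..}"
      using pos that by (intro mult_pos_pos) auto
    also have "\<dots> \<le> measure (D \<star> D) {y<..}" by (rule measure_conv_tail_lower[OF P P S S])
    finally show ?thesis .
  qed
  have "eventually (\<lambda>u. measure D {u<..} / measure (D \<star> D) {u<..} < \<eta>) at_top"
    using lim eta by (rule order_tendstoD)
  then obtain s1 where s1: "\<And>y. y \<ge> s1 \<Longrightarrow> measure D {y<..} / measure (D \<star> D) {y<..} < \<eta>"
    by (auto simp: eventually_at_top_linorder)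
  have "measure D {y<..} \<le> \<eta> * measure (D \<star> D) {y<..}" if "y \<ge> max s1 1" for y
    using s1[of y] DD_pos[of y] that by (simp add: divide_less_eq less_imp_le)
  then show ?thesis by blast
qed

text \<open>In the bounded case (ii) the left-hand side vanishes beyond the bound \<open>A\<close>.\<close>
lemma light_right_tail_consequences:
  fixes D :: "real measure"
  assumes P: "prob_space D" and S: "sets D = sets borel" and L: "light_right_tail D"
  shows "\<exists>\<alpha>>0. measure D {\<alpha><..} > 0 \<and>
           (\<forall>\<eta>>0. \<exists>s0. \<forall>y\<ge>s0. measure D {y<..} \<le> \<eta> * measure (D \<star> D) {y<..})"
proof -
  interpret D: prob_space D by (rule P)
  from L[unfolded light_right_tail_def] show ?thesis
  proof (elim disjE conjE exE)
    assume pos: "\<forall>u>0. measure D {u<..} > 0"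
      and lim: "((\<lambda>u. measure D {u<..} / measure (D \<star> D) {u<..}) \<longlongrightarrow> 0) at_top"
    then show ?thesis using tail_comparison_of_ratio[OF P S pos lim] by (intro exI[of _ 1]) auto
  next
    fix A \<alpha> :: real
    assume a: "\<alpha> > 0" and ae: "AE x in D. x \<le> A" and c: "measure D {\<alpha><..} > 0"
    have "measure D {y<..} = 0" if "A \<le> y" for y
    proof -
      have "AE x in D. x \<notin> {y<..}" using ae by eventually_elim (use that in auto)
      then show ?thesis using S by (subst D.prob_eq_0) auto
    qed
    then have "\<forall>\<eta>>0. \<forall>y\<ge>A. measure D {y<..} \<le> \<eta> * measure (D \<star> D) {y<..}" by simp
    then show ?thesis using a c by blast
  qed
qed


section \<open>Tails of convolution powers\<close>

locale conv_powers =
  fixes \<mu> :: "nat \<Rightarrow> real measure" and D :: "real measure"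
  assumes prob_\<mu>: "prob_space (\<mu> k)" and sets_\<mu>: "sets (\<mu> k) = sets borel"
    and prob_D: "prob_space D" and sets_D: "sets D = sets borel"
    and \<mu>_Suc: "\<mu> (Suc k) = (\<mu> k \<star> D)"
begin

definition tail :: "nat \<Rightarrow> real \<Rightarrow> real" where
  "tail k x = measure (\<mu> k) {x<..}"

lemma tail_nonneg: "0 \<le> tail k x" by (simp add: tail_def)

lemma tail_antimono: "x \<le> y \<Longrightarrow> tail k y \<le> tail k x"
  unfolding tail_def using prob_\<mu> sets_\<mu>
  by (intro finite_measure.finite_measure_mono[OF prob_space.finite_measure]) auto

lemma emeasure_\<mu>: "emeasure (\<mu> k) A = ennreal (measure (\<mu> k) A)"
  using prob_\<mu> by (rule finite_measure.emeasure_eq_measure[OF prob_space.finite_measure])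

lemma tail_shift:
  "measure D {\<alpha><..} ^ m * tail k (x - real m * \<alpha>) \<le> tail (k + m) x"
proof (induction m arbitrary: x)
  case 0 then show ?case by simp
next
  case (Suc m)
  have "measure D {\<alpha><..} ^ Suc m * tail k (x - real (Suc m) * \<alpha>)
      = measure D {\<alpha><..} * (measure D {\<alpha><..} ^ m * tail k ((x - \<alpha>) - real m * \<alpha>))"
    by (simp add: algebra_simps)
  also have "\<dots> \<le> measure D {\<alpha><..} * tail (k + m) (x - \<alpha>)"
    using Suc.IH[of "x - \<alpha>"] by (intro mult_left_mono) auto
  also have "\<dots> \<le> tail (Suc (k + m)) x"
    unfolding tail_def \<mu>_Suc by (rule measure_conv_tail_lower[OF prob_\<mu> prob_D sets_\<mu> sets_D])
  finally show ?case by simp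
qed

lemma prob_DD: "prob_space (D \<star> D)"
  using prob_D sets_D by (intro prob_space_convolution)

lemma \<mu>_SucSuc: "\<mu> (Suc (Suc k)) = (\<mu> k \<star> (D \<star> D))"
  unfolding \<mu>_Suc using prob_\<mu> prob_D sets_\<mu> sets_D
  by (intro convolution_associative[symmetric]) (auto intro: prob_space.finite_measure)

lemma tail_D_split:
  assumes eta: "0 \<le> \<eta>" and tail: "\<And>y. s0 \<le> y \<Longrightarrow> measure D {y<..} \<le> \<eta> * measure (D \<star> D) {y<..}"
  shows "ennreal (measure D {x - v<..})
           \<le> ennreal \<eta> * ennreal (measure (D \<star> D) {x - v<..}) + indicator {x - s0<..} v"
proof (cases "x - s0 < v")
  case True
  have "measure D {x - v<..} \<le> 1" using prob_D by (rule prob_space.prob_le_1)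
  then show ?thesis using True by (simp add: indicator_def ennreal_le_1 add_increasing)
next
  case False
  then have "measure D {x - v<..} \<le> \<eta> * measure (D \<star> D) {x - v<..}" by (intro tail) auto
  then show ?thesis using False eta by (simp add: indicator_def ennreal_mult[symmetric])
qed

text \<open>Integrating \<open>tail_D_split\<close> against \<open>\<mu> k\<close> gives the recursion used for negligibility.\<close>
lemma tail_one_step:
  assumes eta: "0 \<le> \<eta>" and tail: "\<And>y. s0 \<le> y \<Longrightarrow> measure D {y<..} \<le> \<eta> * measure (D \<star> D) {y<..}"
  shows "tail (Suc k) x \<le> \<eta> * tail (Suc (Suc k)) x + tail k (x - s0)"
proof -
  have [measurable]: "(\<lambda>v. measure (D \<star> D) {x - v<..}) \<in> borel_measurable borel"
    using tail_measure_borel_measurable[OF prob_DD] by simp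
  have Suc: "ennreal (tail (Suc k) x) = (\<integral>\<^sup>+v. ennreal (measure D {x - v<..}) \<partial>\<mu> k)"
    using emeasure_conv_tail[OF prob_\<mu> prob_D sets_\<mu> sets_D, of k x]
    by (simp add: tail_def \<mu>_Suc emeasure_\<mu>[of "Suc k", unfolded \<mu>_Suc])
  have SucSuc: "ennreal (tail (Suc (Suc k)) x) = (\<integral>\<^sup>+v. ennreal (measure (D \<star> D) {x - v<..}) \<partial>\<mu> k)"
    using emeasure_conv_tail[OF prob_\<mu> prob_DD sets_\<mu> sets_convolution, of k x]
    by (simp add: tail_def \<mu>_SucSuc emeasure_\<mu>[of "Suc (Suc k)", unfolded \<mu>_SucSuc])
  have "ennreal (tail (Suc k) x)
        \<le> (\<integral>\<^sup>+v. ennreal \<eta> * ennreal (measure (D \<star> D) {x - v<..}) + indicator {x - s0<..} v \<partial>\<mu> k)"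
    unfolding Suc using tail_D_split[OF eta tail] by (intro nn_integral_mono) auto
  also have "\<dots> = (\<integral>\<^sup>+v. ennreal \<eta> * ennreal (measure (D \<star> D) {x - v<..}) \<partial>\<mu> k)
                  + (\<integral>\<^sup>+v. indicator {x - s0<..} v \<partial>\<mu> k)"
    by (rule nn_integral_add; simp add: measurable_cong_sets[OF sets_\<mu> refl]; measurable)
  also have "\<dots> = ennreal \<eta> * (\<integral>\<^sup>+v. ennreal (measure (D \<star> D) {x - v<..}) \<partial>\<mu> k)
                  + (\<integral>\<^sup>+v. indicator {x - s0<..} v \<partial>\<mu> k)"
    by (subst nn_integral_cmult) (simp_all add: measurable_cong_sets[OF sets_\<mu> refl])
  also have "\<dots> = ennreal (\<eta> * tail (Suc (Suc k)) x + tail k (x - s0))"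
    using eta sets_\<mu> by (simp add: SucSuc[symmetric] emeasure_\<mu> tail_def ennreal_mult ennreal_plus)
  finally show ?thesis
    using eta tail_nonneg by (subst (asm) ennreal_le_iff) (auto intro: add_nonneg_nonneg)
qed

end

locale dominated_conv_powers = conv_powers +
  fixes p :: "nat \<Rightarrow> real" and Den :: "real \<Rightarrow> real" and \<alpha> :: real
  assumes p_pos: "\<And>k. p k > 0" and Den_ge: "\<And>k u. p k * tail k u \<le> Den u"
    and \<alpha>_pos: "\<alpha> > 0" and level_pos: "measure D {\<alpha><..} > 0"
    and light: "\<And>\<eta>. \<eta> > 0 \<Longrightarrow> \<exists>s0. \<forall>y\<ge>s0. measure D {y<..} \<le> \<eta> * measure (D \<star> D) {y<..}"
    and ratio0: "\<And>s. ((\<lambda>u. tail 0 (u - s) / tail 0 (u - s - 1)) \<longlongrightarrow> 0) at_top"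
    and tail0_pos: "\<And>x. tail 0 x > 0"
begin

lemma shifted_tail_le_Den:
  "\<exists>C>0. \<forall>u. C * tail k (u - t) \<le> Den u"
proof -
  obtain m :: nat where "t / \<alpha> \<le> real m" using real_arch_simple by blast
  then have m: "t \<le> real m * \<alpha>" using \<alpha>_pos by (simp add: divide_le_eq)
  define C where "C = p (k + m) * measure D {\<alpha><..} ^ m"
  have "C * tail k (u - t) \<le> Den u" for u
  proof -
    have "C * tail k (u - t) \<le> p (k + m) * (measure D {\<alpha><..} ^ m * tail k (u - real m * \<alpha>))"
      unfolding C_def using m p_pos[of "k + m"]
      by (simp add: mult.assoc mult_left_mono tail_antimono)
    also have "\<dots> \<le> p (k + m) * tail (k + m) u"
      using p_pos[of "k + m"] tail_shift by (intro mult_left_mono) auto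
    also have "\<dots> \<le> Den u" by (rule Den_ge)
    finally show ?thesis .
  qed
  moreover have "C > 0" unfolding C_def using p_pos level_pos by simp
  ultimately show ?thesis by blast
qed

lemma tail_negligible: "\<epsilon> > 0 \<Longrightarrow> eventually (\<lambda>u. tail k (u - s) \<le> \<epsilon> * Den u) at_top"
proof (induction k arbitrary: s \<epsilon>)
  case 0
  obtain C where C: "C > 0" "\<And>u. C * tail 0 (u - (s + 1)) \<le> Den u"
    using shifted_tail_le_Den by blast
  have "eventually (\<lambda>u. tail 0 (u - s) / tail 0 (u - s - 1) < \<epsilon> * C) at_top"
    using ratio0[of s] 0 C by (intro order_tendstoD(2)) auto
  then show ?case
  proof eventually_elim
    case (elim u)
    have "tail 0 (u - s) < \<epsilon> * (C * tail 0 (u - (s + 1)))"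
      using elim tail0_pos[of "u - s - 1"] by (simp add: divide_less_eq algebra_simps)
    also have "\<dots> \<le> \<epsilon> * Den u" using C(2) 0 by (intro mult_left_mono) auto
    finally show ?case by simp
  qed
next
  case (Suc k)
  text \<open>Split \<open>tail (Suc k)\<close> by \<open>tail_one_step\<close> into a small multiple of \<open>tail (Suc (Suc k))\<close>
    (controlled by \<open>Den\<close>) and a shifted \<open>tail k\<close> (controlled by the induction hypothesis).\<close>
  obtain C where C: "C > 0" "\<And>u. C * tail (Suc (Suc k)) (u - s) \<le> Den u"
    using shifted_tail_le_Den by blast
  define \<eta> where "\<eta> = \<epsilon> * C / 2"
  have eta: "\<eta> > 0" unfolding \<eta>_def using Suc.prems C by simp
  obtain s0 where s0: "\<And>y. s0 \<le> y \<Longrightarrow> measure D {y<..} \<le> \<eta> * measure (D \<star> D) {y<..}"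
    using light[OF eta] by blast
  have "eventually (\<lambda>u. tail k (u - (s + s0)) \<le> (\<epsilon> / 2) * Den u) at_top"
    using Suc.prems by (intro Suc.IH) auto
  then show ?case
  proof eventually_elim
    case (elim u)
    have "tail (Suc k) (u - s) \<le> \<eta> * tail (Suc (Suc k)) (u - s) + tail k (u - s - s0)"
      using eta s0 by (intro tail_one_step) auto
    also have "\<eta> * tail (Suc (Suc k)) (u - s) = (\<epsilon> / 2) * (C * tail (Suc (Suc k)) (u - s))"
      unfolding \<eta>_def by (simp add: algebra_simps)
    also have "\<dots> \<le> (\<epsilon> / 2) * Den u" using C(2) Suc.prems by (intro mult_left_mono) auto
    also have "tail k (u - s - s0) = tail k (u - (s + s0))" by (simp add: algebra_simps)
    finally show ?case using elim by simp
  qed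
qed

end


section \<open>Tail of the standard normal law\<close>

abbreviation std_normal_measure :: "real measure" where
  "std_normal_measure \<equiv> density lborel std_normal_density"

lemma prob_space_std_normal: "prob_space std_normal_measure"
  using prob_space_normal_density[of 1 0] by (simp add: std_normal_density_def)

lemma emeasure_std_normal: "emeasure std_normal_measure A = ennreal (measure std_normal_measure A)"
  using prob_space_std_normal by (intro finite_measure.emeasure_eq_measure) (simp add: prob_space_def)

lemma std_normal_density_eq: "std_normal_density x = exp (- x\<^sup>2 / 2) / sqrt (2 * pi)"
  by (simp add: std_normal_density_def)

text \<open>Mills' ratio upper bound \<open>P(B > y) \<le> \<phi>(y)/y\<close>, via \<open>\<phi>' = -x\<phi>\<close>.\<close>
lemma std_normal_tail_upper:
  assumes y: "y > 0"
  shows "measure std_normal_measure {y<..} \<le> std_normal_density y / y"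
proof -
  have deriv: "DERIV (\<lambda>x. - std_normal_density x) x :> x * std_normal_density x" for x
    unfolding std_normal_density_eq
    by (auto intro!: derivative_eq_intros simp: field_simps power2_eq_square)
  have lim: "((\<lambda>x. - std_normal_density x) \<longlongrightarrow> 0) at_top"
    unfolding std_normal_density_eq by real_asymp
  have "emeasure std_normal_measure {y<..} = (\<integral>\<^sup>+x. ennreal (std_normal_density x) * indicator {y<..} x \<partial>lborel)"
    by (subst emeasure_density) (auto simp: mult.commute)
  also have "\<dots> \<le> (\<integral>\<^sup>+x. ennreal (1/y) * (ennreal (x * std_normal_density x) * indicator {y..} x) \<partial>lborel)"
  proof (intro nn_integral_mono)
    fix x
    have "y < x \<Longrightarrow> std_normal_density x \<le> (1/y) * (x * std_normal_density x)"
      using y by (simp add: field_simps mult_right_mono)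
    then show "ennreal (std_normal_density x) * indicator {y<..} x
               \<le> ennreal (1/y) * (ennreal (x * std_normal_density x) * indicator {y..} x)"
      using y by (auto simp: indicator_def ennreal_mult[symmetric])
  qed
  also have "\<dots> = ennreal (1/y) * (\<integral>\<^sup>+x. ennreal (x * std_normal_density x) * indicator {y..} x \<partial>lborel)"
    by (intro nn_integral_cmult) measurable
  also have "(\<integral>\<^sup>+x. ennreal (x * std_normal_density x) * indicator {y..} x \<partial>lborel) = 0 - (- std_normal_density y)"
    using y by (intro nn_integral_FTC_atLeast[OF _ deriv _ lim]) auto
  finally have "emeasure std_normal_measure {y<..} \<le> ennreal (std_normal_density y / y)"
    using y by (simp add: ennreal_mult[symmetric])
  then show ?thesis using y by (simp add: emeasure_std_normal ennreal_le_iff)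
qed

text \<open>Lower bound: the density on \<open>(y, y+1]\<close> is at least \<open>\<phi>(y+1)\<close>.\<close>
lemma std_normal_tail_lower:
  assumes y: "y \<ge> 0"
  shows "std_normal_density (y + 1) \<le> measure std_normal_measure {y<..}"
proof -
  have "ennreal (std_normal_density (y + 1))
        = (\<integral>\<^sup>+x. ennreal (std_normal_density (y + 1)) * indicator {y<..y+1} x \<partial>lborel)"
    by (simp add: nn_integral_cmult_indicator)
  also have "\<dots> \<le> (\<integral>\<^sup>+x. ennreal (std_normal_density x) * indicator {y<..} x \<partial>lborel)"
  proof (intro nn_integral_mono)
    fix x
    have "y < x \<Longrightarrow> x \<le> y + 1 \<Longrightarrow> std_normal_density (y + 1) \<le> std_normal_density x"
      using y unfolding std_normal_density_eq
      by (intro divide_right_mono) (auto intro!: power_mono)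
    then show "ennreal (std_normal_density (y + 1)) * indicator {y<..y+1} x
               \<le> ennreal (std_normal_density x) * indicator {y<..} x"
      by (auto simp: indicator_def)
  qed
  also have "\<dots> = emeasure std_normal_measure {y<..}"
    by (subst emeasure_density) (auto simp: mult.commute)
  finally show ?thesis by (simp add: emeasure_std_normal ennreal_le_iff)
qed

lemma std_normal_tail_pos: "measure std_normal_measure {x<..} > 0"
proof -
  have "0 < std_normal_density (max x 0 + 1)" by (simp add: std_normal_density_def)
  also have "\<dots> \<le> measure std_normal_measure {max x 0<..}" by (intro std_normal_tail_lower) auto
  also have "\<dots> \<le> measure std_normal_measure {x<..}"
    using prob_space_std_normal by (intro finite_measure.finite_measure_mono) (auto simp: prob_space_def)
  finally show ?thesis .
qed

text \<open>Combining both bounds: \<open>P(B > u - s) / P(B > u - s - 1) \<le> 1/(u - s) \<rightarrow> 0\<close>.\<close>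
lemma std_normal_tail_ratio:
  "((\<lambda>u. measure std_normal_measure {u - s<..} / measure std_normal_measure {u - s - 1<..}) \<longlongrightarrow> 0) at_top"
proof (rule tendsto_sandwich[where f="\<lambda>_. 0" and h="\<lambda>u. 1 / (u - s)"])
  show "eventually (\<lambda>u. measure std_normal_measure {u - s<..} / measure std_normal_measure {u - s - 1<..}
                        \<le> 1 / (u - s)) at_top"
    using eventually_ge_at_top[of "s + 1"]
  proof eventually_elim
    case (elim u)
    have a: "measure std_normal_measure {u - s<..} \<le> std_normal_density (u - s) / (u - s)"
      using elim by (intro std_normal_tail_upper) auto
    have b: "std_normal_density (u - s) \<le> measure std_normal_measure {u - s - 1<..}"
      using elim std_normal_tail_lower[of "u - s - 1"] by auto
    have pos: "std_normal_density (u - s) > 0" by (simp add: std_normal_density_def)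
    have "measure std_normal_measure {u - s<..} / measure std_normal_measure {u - s - 1<..}
          \<le> (std_normal_density (u - s) / (u - s)) / std_normal_density (u - s)"
      using a b pos elim by (intro frac_le) auto
    also have "\<dots> = 1 / (u - s)" using pos by simp
    finally show ?case .
  qed
  show "((\<lambda>u. 1 / (u - s)) \<longlongrightarrow> 0) at_top" by real_asymp
qed simp_all


section \<open>Poisson probabilities\<close>

definition poisson_prob :: "real \<Rightarrow> nat \<Rightarrow> real" where
  "poisson_prob l k = exp (- l) * l ^ k / fact k"

lemma poisson_prob_pos: "l > 0 \<Longrightarrow> 0 < poisson_prob l k"
  by (simp add: poisson_prob_def)

lemma poisson_prob_sums: "poisson_prob l sums 1"
proof -
  have "(\<lambda>n. exp (- l) * (l ^ n /\<^sub>R fact n)) sums (exp (- l) * exp l)"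
    by (intro sums_mult exp_converges)
  moreover have "(\<lambda>n. exp (- l) * (l ^ n /\<^sub>R fact n)) = poisson_prob l"
    by (simp add: fun_eq_iff poisson_prob_def divide_inverse real_scaleR_def mult_ac)
  ultimately show ?thesis by (simp add: exp_minus)
qed

lemma poisson_prob_shift:
  assumes "l > 0"
  shows "poisson_prob l (i + j) \<le> poisson_prob l j * (l / (real j + 1)) ^ i"
proof (induction i)
  case 0 then show ?case by simp
next
  case (Suc i)
  have "poisson_prob l (Suc i + j) = poisson_prob l (i + j) * (l / (real (i + j) + 1))"
    by (simp add: poisson_prob_def field_simps)
  also have "\<dots> \<le> poisson_prob l (i + j) * (l / (real j + 1))"
    using assms poisson_prob_pos[OF assms] by (intro mult_left_mono divide_left_mono) (auto intro: less_imp_le)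
  also have "\<dots> \<le> poisson_prob l j * (l / (real j + 1)) ^ i * (l / (real j + 1))"
    using Suc.IH assms by (intro mult_right_mono) auto
  finally show ?case by (simp add: mult_ac)
qed

lemma poisson_tail_geometric:
  assumes l: "l > 0" and r: "l / (real j + 1) < 1"
  shows "1 - (\<Sum>i<j. poisson_prob l i) \<le> poisson_prob l j / (1 - l / (real j + 1))"
proof -
  define r where "r = l / (real j + 1)"
  have r0: "0 \<le> r" using l by (simp add: r_def)
  have r1: "r < 1" using r by (simp add: r_def)
  have summ: "summable (poisson_prob l)" using poisson_prob_sums by (simp add: sums_iff)
  have "1 - (\<Sum>i<j. poisson_prob l i) = (\<Sum>i. poisson_prob l (i + j))"
    using suminf_split_initial_segment[OF summ, of j] poisson_prob_sums by (simp add: sums_iff)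
  also have "\<dots> \<le> (\<Sum>i. poisson_prob l j * r ^ i)"
    using summable_ignore_initial_segment[OF summ] r0 r1 poisson_prob_shift[OF l, of _ j]
    by (intro suminf_le) (auto simp: r_def abs_of_pos[OF l] intro: summable_mult summable_geometric)
  also have "\<dots> = poisson_prob l j / (1 - r)"
    using r0 r1 by (simp add: suminf_mult summable_geometric suminf_geometric)
  finally show ?thesis by (simp add: r_def)
qed

lemma poisson_tail_le:
  assumes l: "l > 0" and d: "\<delta> > 0"
  shows "\<exists>K. \<forall>j\<ge>K. 1 - (\<Sum>i<j. poisson_prob l i) \<le> (1 + \<delta>) * poisson_prob l j"
proof -
  obtain K :: nat where K: "l * (1 + \<delta>) / \<delta> \<le> real K" using real_arch_simple by blast
  have "1 - (\<Sum>i<j. poisson_prob l i) \<le> (1 + \<delta>) * poisson_prob l j" if j: "K \<le> j" for j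
  proof -
    define r where "r = l / (real j + 1)"
    have "l * (1 + \<delta>) \<le> \<delta> * real K" using K d by (simp add: divide_le_eq mult.commute)
    also have "\<dots> < \<delta> * (real j + 1)" using j d by simp
    finally have r_lt: "r * (1 + \<delta>) < \<delta>" unfolding r_def by (simp add: field_simps)
    have "r * (1 + \<delta>) < 1 * (1 + \<delta>)" using r_lt by simp
    then have r1: "r < 1" using d by (simp add: mult_less_cancel_right)
    have "1 - (\<Sum>i<j. poisson_prob l i) \<le> poisson_prob l j / (1 - r)"
      using poisson_tail_geometric[OF l] r1 unfolding r_def by simp
    also have "\<dots> \<le> (1 + \<delta>) * poisson_prob l j"
    proof -
      have "poisson_prob l j * 1 \<le> poisson_prob l j * ((1 + \<delta>) * (1 - r))"
        using r_lt poisson_prob_pos[OF l, of j] by (intro mult_left_mono) (auto simp: algebra_simps)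
      then show ?thesis using r1 by (simp add: divide_le_eq mult_ac)
    qed
    finally show ?thesis .
  qed
  then show ?thesis by blast
qed


section \<open>An abstract ratio lemma\<close>

lemma ratio_tendsto_one:
  fixes Num Den :: "real \<Rightarrow> real" and a :: "nat \<Rightarrow> real \<Rightarrow> real"
  assumes Den_pos: "\<And>u. Den u > 0"
    and low: "\<And>u. Den u \<le> Num u"
    and small: "\<And>k \<epsilon>. \<epsilon> > 0 \<Longrightarrow> eventually (\<lambda>u. a k u \<le> \<epsilon> * Den u) at_top"
    and up: "\<And>\<delta>. \<delta> > 0 \<Longrightarrow> \<exists>K. \<forall>u. Num u \<le> (\<Sum>k<K. a k u) + (1 + \<delta>) * Den u"
  shows "((\<lambda>u. Num u / Den u) \<longlongrightarrow> 1) at_top"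
proof (rule order_tendstoI)
  fix y :: real assume "y < 1"
  then show "eventually (\<lambda>u. y < Num u / Den u) at_top"
    using low Den_pos by (intro always_eventually allI) (auto simp: le_divide_eq intro: less_le_trans)
next
  fix y :: real assume y: "1 < y"
  define \<delta> where "\<delta> = (y - 1) / 3"
  have d: "\<delta> > 0" using y by (simp add: \<delta>_def)
  obtain K where K: "\<And>u. Num u \<le> (\<Sum>k<K. a k u) + (1 + \<delta>) * Den u" using up[OF d] by blast
  have "eventually (\<lambda>u. \<forall>k\<in>{..<K}. a k u \<le> (\<delta> / (real K + 1)) * Den u) at_top"
    using d by (intro eventually_ball_finite ballI small) auto
  then show "eventually (\<lambda>u. Num u / Den u < y) at_top"
  proof eventually_elim
    case (elim u)
    have "(\<Sum>k<K. a k u) \<le> (\<Sum>k<K. (\<delta> / (real K + 1)) * Den u)" using elim by (intro sum_mono) auto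
    also have "\<dots> = real K / (real K + 1) * \<delta> * Den u" by simp
    also have "\<dots> \<le> \<delta> * Den u" using d Den_pos[of u] by (intro mult_right_mono) (auto simp: field_simps)
    finally have "Num u \<le> (1 + 2 * \<delta>) * Den u" using K[of u] by (simp add: algebra_simps)
    also have "\<dots> < y * Den u" using Den_pos[of u] y by (intro mult_strict_right_mono) (auto simp: \<delta>_def field_simps)
    finally show ?case using Den_pos[of u] by (simp add: divide_less_eq)
  qed
qed


section \<open>Suprema of counting step functions\<close>

text \<open>The supremum of countably many real random variables is measurable, also when it is
  unbounded (then \<open>Sup\<close> takes the fixed default value \<open>Sup UNIV\<close>).\<close>
lemma Sup_real_unbounded:
  fixes A :: "real set"
  assumes "\<not> bdd_above A"
  shows "Sup A = Sup (UNIV :: real set)"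
proof -
  have "(\<lambda>z. \<forall>x\<in>A. x \<le> z) = (\<lambda>z. False)" by (intro ext) (use assms in \<open>auto simp: bdd_above_def\<close>)
  moreover have "(\<lambda>z. \<forall>x\<in>(UNIV::real set). x \<le> z) = (\<lambda>z. False)"
    by (auto intro!: ext) (metis gt_ex not_le)
  ultimately show ?thesis unfolding Sup_real_def by simp
qed

lemma measurable_SUP_real:
  fixes F :: "nat \<Rightarrow> 'a \<Rightarrow> real"
  assumes F[measurable]: "\<And>j. F j \<in> borel_measurable M"
  shows "(\<lambda>x. SUP j. F j x) \<in> borel_measurable M"
proof -
  define bd where "bd x = (\<exists>n::nat. \<forall>j. F j x \<le> real n)" for x
  have bd_iff: "bd x \<longleftrightarrow> bdd_above (range (\<lambda>j. F j x))" for x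
    unfolding bd_def bdd_above_def by (auto, meson order_trans real_arch_simple)
  have [measurable]: "Measurable.pred M bd" unfolding bd_def by measurable
  define G where "G j x = (if bd x then F j x else 0)" for j x
  have [measurable]: "G j \<in> borel_measurable M" for j unfolding G_def by measurable
  have "bdd_above (range (\<lambda>j. G j x))" for x by (cases "bd x") (auto simp: G_def bd_iff)
  then have "(\<lambda>x. SUP j. G j x) \<in> borel_measurable M"
    by (intro borel_measurable_cSUP) measurable
  moreover have "(SUP j. F j x) = (if bd x then (SUP j. G j x) else Sup (UNIV::real set))" for x
    using Sup_real_unbounded[of "range (\<lambda>j. F j x)"] by (auto simp: G_def bd_iff)
  ultimately show ?thesis by simp
qed

lemma count_level_attained:
  fixes P :: "nat \<Rightarrow> real"
  defines "St \<equiv> \<lambda>s. {n. 1 \<le> n \<and> P n \<le> s}"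
  assumes t: "t \<in> {0..1}"
  shows "\<exists>s\<in>{0, 1} \<union> {P m |m. 0 \<le> P m \<and> P m \<le> 1}. card (St t) = card (St s)"
proof -
  have mono: "s \<le> s' \<Longrightarrow> St s \<subseteq> St s'" for s s' unfolding St_def by auto
  show ?thesis
  proof (cases "finite (St t) \<and> St t \<noteq> {}")
    case False
    then consider "infinite (St t)" | "St t = {}" by blast
    then show ?thesis
    proof cases
      case 1
      then have "infinite (St 1)" using mono[of t 1] t finite_subset by auto
      then show ?thesis using 1 by auto
    next
      case 2
      then have "St 0 = {}" using mono[of 0 t] t by auto
      then show ?thesis using 2 by auto
    qed
  next
    case True
    text \<open>The last arrival up to time \<open>t\<close> determines the level.\<close>
    then have "Max (P ` St t) \<in> P ` St t" by (intro Max_in) auto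
    then obtain m where m: "m \<in> St t" "P m = Max (P ` St t)" by auto
    then have max: "\<And>n. n \<in> St t \<Longrightarrow> P n \<le> P m" using True by auto
    show ?thesis
    proof (cases "0 \<le> P m")
      case True
      have "St (P m) = St t" using m max unfolding St_def by auto
      moreover have "P m \<le> 1" using m t unfolding St_def by auto
      ultimately show ?thesis using True by auto
    next
      case False
      have "St 0 = St t" using m max False t unfolding St_def by (auto, force)
      then show ?thesis by auto
    qed
  qed
qed

text \<open>Consequently the supremum over \<open>[0,1]\<close> of \<open>G\<close> applied to the counting function is a
  supremum over the countable family of candidate times \<open>\<tau> j\<close>.\<close>
lemma count_image_countable:
  fixes P :: "nat \<Rightarrow> real" and G :: "nat \<Rightarrow> real"
  defines "f \<equiv> \<lambda>t. G (card {n. 1 \<le> n \<and> P n \<le> t})"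
  defines "\<tau> \<equiv> \<lambda>j. (case j of 0 \<Rightarrow> 0 | Suc 0 \<Rightarrow> 1
                      | Suc (Suc m) \<Rightarrow> if 0 \<le> P m \<and> P m \<le> 1 then P m else (0::real))"
  shows "f ` {0..1} = range (\<lambda>j. f (\<tau> j))"
proof
  have "\<tau> j \<in> {0..1}" for j unfolding \<tau>_def by (auto split: nat.split)
  then show "range (\<lambda>j. f (\<tau> j)) \<subseteq> f ` {0..1}" by blast
next
  show "f ` {0..1} \<subseteq> range (\<lambda>j. f (\<tau> j))"
  proof safe
    fix t :: real assume t: "t \<in> {0..1}"
    obtain s where s: "s \<in> {0, 1} \<union> {P m |m. 0 \<le> P m \<and> P m \<le> 1}"
      and "card {n. 1 \<le> n \<and> P n \<le> t} = card {n. 1 \<le> n \<and> P n \<le> s}"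
      using count_level_attained[OF t, of P] by blast
    then have "f t = f s" by (simp add: f_def)
    have "s = \<tau> 0 \<or> s = \<tau> 1 \<or> (\<exists>m. s = \<tau> (Suc (Suc m)))"
      using s(1) unfolding \<tau>_def by auto
    then show "f t \<in> range (\<lambda>j. f (\<tau> j))" using \<open>f t = f s\<close> by (metis rangeI)
  qed
qed


section \<open>The compound Poisson model\<close>

lemma (in prob_space) indep_var_disjoint_blocks:
  assumes "indep_vars (\<lambda>_. borel) F UNIV" "I \<inter> J = {}"
    and "f \<in> borel_measurable (PiM I (\<lambda>_. borel))" "g \<in> borel_measurable (PiM J (\<lambda>_. borel))"
  shows "indep_var borel (\<lambda>\<omega>. f (restrict (\<lambda>i. F i \<omega>) I)) borel (\<lambda>\<omega>. g (restrict (\<lambda>i. F i \<omega>) J))"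
  using indep_var_compose[OF indep_var_restrict[OF assms(1,2)] assms(3,4)] by (simp add: comp_def)

locale compound_poisson_setting = prob_space M for M :: "'a measure" +
  fixes l :: real and T X :: "nat \<Rightarrow> 'a \<Rightarrow> real" and B :: "'a \<Rightarrow> real"
  assumes l_pos: "l > 0"
    and T_exp: "\<And>n. distributed M lborel (T n) (exponential_density l)"
    and X_meas[measurable]: "\<And>k. X k \<in> borel_measurable M"
    and X_distr: "\<And>k. distr M borel (X k) = distr M borel (X 0)"
    and B_norm: "distributed M lborel B std_normal_density"
    and indep: "indep_vars (\<lambda>_. borel) (driving_family T X B) UNIV"
begin

definition arrival :: "nat \<Rightarrow> 'a \<Rightarrow> real" where "arrival n \<omega> = (\<Sum>i<n. T i \<omega>)"
definition N1 :: "'a \<Rightarrow> nat" where "N1 \<omega> = poisson_count T 1 \<omega>"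
definition S :: "nat \<Rightarrow> 'a \<Rightarrow> real" where "S k \<omega> = (\<Sum>i<k. X i \<omega>)"
definition V :: "nat \<Rightarrow> 'a \<Rightarrow> real" where "V k \<omega> = B \<omega> + S k \<omega>"

lemma T_meas[measurable]: "T n \<in> borel_measurable M"
  using distributed_measurable[OF T_exp[of n]] by (simp only: measurable_lborel1)

lemma B_meas[measurable]: "B \<in> borel_measurable M"
  using distributed_measurable[OF B_norm] by (simp only: measurable_lborel1)

lemma arrival_meas[measurable]: "arrival n \<in> borel_measurable M" unfolding arrival_def by measurable
lemma S_meas[measurable]: "S k \<in> borel_measurable M" unfolding S_def by measurable
lemma V_meas[measurable]: "V k \<in> borel_measurable M" unfolding V_def by measurable

lemma poisson_count_eq: "poisson_count T t \<omega> = card {n. 1 \<le> n \<and> arrival n \<omega> \<le> t}"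
  by (simp add: poisson_count_def arrival_def)

lemma compound_poisson_eq: "compound_poisson T X t \<omega> = S (poisson_count T t \<omega>) \<omega>"
  by (simp add: compound_poisson_def S_def)

lemma N1_eq: "N1 \<omega> = card {n. 1 \<le> n \<and> arrival n \<omega> \<le> 1}"
  by (simp add: N1_def poisson_count_eq)

lemma N1_meas[measurable]: "N1 \<in> measurable M (count_space UNIV)"
  unfolding N1_eq by measurable

lemma compound_poisson_meas:
  assumes [measurable]: "g \<in> borel_measurable M"
  shows "(\<lambda>\<omega>. compound_poisson T X (g \<omega>) \<omega>) \<in> borel_measurable M"
proof -
  have [measurable]: "(\<lambda>\<omega>. poisson_count T (g \<omega>) \<omega>) \<in> measurable M (count_space UNIV)"
    unfolding poisson_count_eq by measurable
  show ?thesis unfolding compound_poisson_eq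
    by (rule measurable_compose_countable'[where I=UNIV]) auto
qed

text \<open>Candidate times at which the supremum of the path over \<open>[0,1]\<close> is attained.\<close>
definition cand_time :: "nat \<Rightarrow> 'a \<Rightarrow> real" where
  "cand_time j \<omega> = (case j of 0 \<Rightarrow> 0 | Suc 0 \<Rightarrow> 1
     | Suc (Suc m) \<Rightarrow> if 0 \<le> arrival m \<omega> \<and> arrival m \<omega> \<le> 1 then arrival m \<omega> else 0)"

lemma cand_time_meas[measurable]: "cand_time j \<in> borel_measurable M"
proof -
  consider "j = 0" | "j = 1" | m where "j = Suc (Suc m)" by (metis One_nat_def not0_implies_Suc)
  then show ?thesis
  proof cases
    case (3 m)
    show ?thesis unfolding cand_time_def 3 nat.case by measurable
  qed (simp_all add: cand_time_def[abs_def])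
qed

lemma SUP_compound_poisson_meas[measurable]:
  "(\<lambda>\<omega>. SUP t\<in>{0..1}. compound_poisson T X t \<omega>) \<in> borel_measurable M"
proof -
  have "(\<lambda>t. compound_poisson T X t \<omega>) ` {0..1} = range (\<lambda>j. compound_poisson T X (cand_time j \<omega>) \<omega>)" for \<omega>
    unfolding compound_poisson_eq poisson_count_eq cand_time_def by (rule count_image_countable)
  then have "(SUP t\<in>{0..1}. compound_poisson T X t \<omega>) = (SUP j. compound_poisson T X (cand_time j \<omega>) \<omega>)" for \<omega>
    by (simp add: image_image)
  then show ?thesis by (simp add: measurable_SUP_real compound_poisson_meas)
qed

text \<open>\<open>N(1)\<close> depends only on the \<open>T\<close>'s, \<open>V k\<close> only on \<open>B\<close> and the jumps before \<open>k\<close>.\<close>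
lemma indep_N1_V: "indep_var borel (\<lambda>\<omega>. real (N1 \<omega>)) borel (V k)"
proof -
  have [measurable]: "(\<lambda>h. h (Inl i)) \<in> borel_measurable (PiM (range Inl) (\<lambda>_. borel))"
    "(\<lambda>h. h (Inr j)) \<in> borel_measurable (PiM (range Inr) (\<lambda>_. borel))" for i j
    by (auto intro: measurable_component_singleton)
  have count: "(\<lambda>h :: nat + nat + unit \<Rightarrow> real. card {n. 1 \<le> n \<and> (\<Sum>i<n. h (Inl i)) \<le> (1::real)})
                 \<in> measurable (PiM (range Inl) (\<lambda>_. borel)) (count_space UNIV)"
    by (rule measurable_card) (simp only: mem_Collect_eq, measurable)
  have "indep_var borel
      (\<lambda>\<omega>. (\<lambda>h. real (card {n. 1 \<le> n \<and> (\<Sum>i<n. h (Inl i)) \<le> (1::real)}))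
             (restrict (\<lambda>i. driving_family T X B i \<omega>) (range Inl)))
      borel (\<lambda>\<omega>. (\<lambda>h. h (Inr (Inr ())) + (\<Sum>i<k. h (Inr (Inl i))))
             (restrict (\<lambda>i. driving_family T X B i \<omega>) (range Inr)))"
  proof (rule indep_var_disjoint_blocks[OF indep])
    show "(\<lambda>h :: nat + nat + unit \<Rightarrow> real. real (card {n. 1 \<le> n \<and> (\<Sum>i<n. h (Inl i)) \<le> (1::real)}))
            \<in> borel_measurable (PiM (range Inl) (\<lambda>_. borel))"
      by (rule measurable_compose[OF count]) simp
  qed auto
  then show ?thesis
    by (simp add: N1_def poisson_count_def driving_family_def V_def[abs_def] S_def)
qed

lemma indep_V_X: "indep_var borel (V k) borel (X k)"
proof -
  define A :: "(nat + nat + unit) set" where "A = insert (Inr (Inr ())) ((\<lambda>i. Inr (Inl i)) ` {..<k})"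
  have [measurable]: "(\<lambda>h. h j) \<in> borel_measurable (PiM A (\<lambda>_. borel))" if "j \<in> A" for j
    using that by (rule measurable_component_singleton)
  have "indep_var borel
      (\<lambda>\<omega>. (\<lambda>h. h (Inr (Inr ())) + (\<Sum>i<k. h (Inr (Inl i)))) (restrict (\<lambda>i. driving_family T X B i \<omega>) A))
      borel (\<lambda>\<omega>. (\<lambda>h. h (Inr (Inl k))) (restrict (\<lambda>i. driving_family T X B i \<omega>) {Inr (Inl k)}))"
  proof (rule indep_var_disjoint_blocks[OF indep])
    show "(\<lambda>h. h (Inr (Inr ())) + (\<Sum>i<k. h (Inr (Inl i))) :: real) \<in> borel_measurable (PiM A (\<lambda>_. borel))"
      by (measurable; auto simp: A_def)
    show "(\<lambda>h. h (Inr (Inl k))) \<in> borel_measurable (PiM {Inr (Inl k)} (\<lambda>_. borel))"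
      by (rule measurable_component_singleton) auto
  qed (auto simp: A_def)
  then show ?thesis by (simp add: A_def V_def[abs_def] S_def driving_family_def)
qed


subsection \<open>The law of \<open>V k\<close>: Gaussian convolved \<open>k\<close> times with the jump law\<close>

definition D :: "real measure" where "D = distr M borel (X 0)"
definition \<mu> :: "nat \<Rightarrow> real measure" where "\<mu> k = distr M borel (V k)"

lemma \<mu>_Suc: "\<mu> (Suc k) = (\<mu> k \<star> D)"
proof -
  have "V (Suc k) = (\<lambda>\<omega>. V k \<omega> + X k \<omega>)" by (simp add: fun_eq_iff V_def S_def)
  moreover have "distr M borel (\<lambda>\<omega>. V k \<omega> + X k \<omega>) = (distr M borel (V k) \<star> distr M borel (X k))"
    by (rule sum_indep_random_variable[OF indep_V_X]) measurable
  ultimately show ?thesis unfolding \<mu>_def D_def X_distr[of k] by simp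
qed

lemma \<mu>_0: "\<mu> 0 = std_normal_measure"
proof -
  have "\<mu> 0 = distr M lborel B" unfolding \<mu>_def by (intro distr_cong) (auto simp: V_def S_def)
  also have "\<dots> = std_normal_measure" by (rule distributed_distr_eq_density[OF B_norm])
  finally show ?thesis .
qed

lemma prob_space_\<mu>: "prob_space (\<mu> k)"
  unfolding \<mu>_def by (intro prob_space_distr) measurable

lemma prob_space_D: "prob_space D"
  unfolding D_def by (intro prob_space_distr) measurable

sublocale laws: conv_powers \<mu> D
  by (intro conv_powers.intro prob_space_\<mu> prob_space_D \<mu>_Suc) (simp_all add: \<mu>_def D_def)

lemma prob_V_gt: "prob {\<omega> \<in> space M. u < V k \<omega>} = laws.tail k u"
  unfolding laws.tail_def \<mu>_def by (subst measure_distr) (auto intro!: arg_cong[where f=prob])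

lemma tail_0_eq: "laws.tail 0 x = measure std_normal_measure {x<..}"
  by (simp add: laws.tail_def \<mu>_0)


subsection \<open>\<open>N(1)\<close> is Poisson distributed\<close>

lemma arrival_erlang:
  assumes "1 \<le> n"
  shows "distributed M lborel (arrival n) (erlang_density (n - 1) l)"
proof -
  let ?F = "driving_family T X B"
  have "distributed M lborel (\<lambda>x. \<Sum>i\<in>Inl ` {..<n}. ?F i x)
          (erlang_density (card (Inl ` {..<n} :: (nat + nat + unit) set) - 1) l)"
  proof (rule exponential_distributed_sum)
    show "indep_vars (\<lambda>i. borel) ?F (Inl ` {..<n})" by (rule indep_vars_subset[OF indep]) auto
  qed (use assms l_pos T_exp in \<open>auto simp: driving_family_def lessThan_empty_iff\<close>)
  moreover have "(\<lambda>x. \<Sum>i\<in>Inl ` {..<n}. ?F i x) = arrival n"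
    by (auto simp: fun_eq_iff sum.reindex arrival_def driving_family_def)
  ultimately show ?thesis by (simp add: card_image)
qed

lemma prob_arrival_le_1:
  assumes n: "1 \<le> n"
  shows "prob {\<omega> \<in> space M. arrival n \<omega> \<le> 1} = 1 - (\<Sum>j<n. poisson_prob l j)"
proof -
  obtain m where m: "n = Suc m" using n by (cases n) auto
  show ?thesis using erlang_distributed_le[OF arrival_erlang[OF n], of 1] l_pos
    by (simp add: m erlang_CDF_def poisson_prob_def lessThan_Suc_atMost[symmetric] mult.commute)
qed

lemma T_pos_AE: "AE \<omega> in M. \<forall>i. 0 < T i \<omega>"
proof (subst AE_all_countable, intro allI)
  fix i
  have "prob {\<omega> \<in> space M. T i \<omega> \<le> 0} = 0"
    using exponential_distributedD_le[OF T_exp[of i] _ l_pos, of 0] by simp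
  then have "AE \<omega> in M. \<not> T i \<omega> \<le> 0"
    by (subst prob_Collect_eq_0[symmetric]) auto
  then show "AE \<omega> in M. 0 < T i \<omega>" by (auto simp: not_le)
qed

lemma arrival_mono: "(\<And>i. 0 \<le> T i \<omega>) \<Longrightarrow> n \<le> m \<Longrightarrow> arrival n \<omega> \<le> arrival m \<omega>"
  unfolding arrival_def by (intro sum_mono2) auto

lemma prob_all_arrivals_le_1: "prob {\<omega> \<in> space M. \<forall>n\<ge>1. arrival n \<omega> \<le> 1} = 0"
proof (rule antisym)
  have "(\<lambda>n. 1 - (\<Sum>j<n. poisson_prob l j)) \<longlonglongrightarrow> 1 - 1"
    using poisson_prob_sums by (intro tendsto_intros) (simp add: sums_def)
  moreover have "eventually (\<lambda>n. prob {\<omega> \<in> space M. \<forall>n\<ge>1. arrival n \<omega> \<le> 1}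
                               \<le> 1 - (\<Sum>j<n. poisson_prob l j)) sequentially"
    using eventually_ge_at_top[of 1]
  proof eventually_elim
    case (elim n)
    have "prob {\<omega> \<in> space M. \<forall>n\<ge>1. arrival n \<omega> \<le> 1} \<le> prob {\<omega> \<in> space M. arrival n \<omega> \<le> 1}"
      using elim by (intro finite_measure_mono) auto
    then show ?case using prob_arrival_le_1[OF elim] by simp
  qed
  ultimately show "prob {\<omega> \<in> space M. \<forall>n\<ge>1. arrival n \<omega> \<le> 1} \<le> 0"
    by (intro tendsto_lowerbound[where F=sequentially]) auto
qed simp

lemma finite_arrivals_AE: "AE \<omega> in M. finite {n. 1 \<le> n \<and> arrival n \<omega> \<le> 1}"
proof -
  have "AE \<omega> in M. \<not> (\<forall>n\<ge>1. arrival n \<omega> \<le> 1)"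
    using prob_all_arrivals_le_1 by (subst prob_Collect_eq_0[symmetric]) auto
  then show ?thesis using T_pos_AE
  proof eventually_elim
    case (elim \<omega>)
    show ?case
    proof (rule ccontr)
      assume inf: "infinite {n. 1 \<le> n \<and> arrival n \<omega> \<le> 1}"
      have "arrival n \<omega> \<le> 1" if "1 \<le> n" for n
      proof -
        obtain m where "1 \<le> m" "arrival m \<omega> \<le> 1" "n \<le> m"
          using inf by (metis (lifting) finite_nat_set_iff_bounded_le mem_Collect_eq nat_le_linear)
        then show ?thesis using arrival_mono[of \<omega> n m] elim(2) by (auto intro: less_imp_le order_trans)
      qed
      then show False using elim(1) by simp
    qed
  qed
qed

lemma N1_ge_iff:
  assumes T: "\<And>i. 0 \<le> T i \<omega>" and fin: "finite {n. 1 \<le> n \<and> arrival n \<omega> \<le> 1}" and n: "1 \<le> n"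
  shows "n \<le> N1 \<omega> \<longleftrightarrow> arrival n \<omega> \<le> 1"
proof
  assume le: "arrival n \<omega> \<le> 1"
  have "{1..n} \<subseteq> {n. 1 \<le> n \<and> arrival n \<omega> \<le> 1}"
    using arrival_mono[OF T] le by (auto intro: order_trans[OF _ le])
  then have "card {1..n} \<le> N1 \<omega>" unfolding N1_eq using fin by (intro card_mono)
  then show "n \<le> N1 \<omega>" by simp
next
  assume ge: "n \<le> N1 \<omega>"
  show "arrival n \<omega> \<le> 1"
  proof (rule ccontr)
    assume "\<not> arrival n \<omega> \<le> 1"
    then have "{n. 1 \<le> n \<and> arrival n \<omega> \<le> 1} \<subseteq> {1..<n}"
      using arrival_mono[OF T, of n] by (auto simp: not_le) (meson not_less order_trans)
    then have "N1 \<omega> \<le> card {1..<n}" unfolding N1_eq by (intro card_mono) auto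
    then show False using ge n by simp
  qed
qed

lemma prob_N1_ge: "prob {\<omega> \<in> space M. n \<le> N1 \<omega>} = 1 - (\<Sum>j<n. poisson_prob l j)"
proof (cases "n = 0")
  case True then show ?thesis by (simp add: prob_space)
next
  case False
  then have n: "1 \<le> n" by simp
  have "prob {\<omega> \<in> space M. n \<le> N1 \<omega>} = prob {\<omega> \<in> space M. arrival n \<omega> \<le> 1}"
  proof (rule measure_eq_AE)
    show "AE x in M. (x \<in> {\<omega> \<in> space M. n \<le> N1 \<omega>}) = (x \<in> {\<omega> \<in> space M. arrival n \<omega> \<le> 1})"
      using T_pos_AE finite_arrivals_AE
      by eventually_elim (use N1_ge_iff n in \<open>auto simp: less_imp_le\<close>)
  qed measurable
  then show ?thesis using prob_arrival_le_1[OF n] by simp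
qed

lemma prob_N1_eq: "prob {\<omega> \<in> space M. N1 \<omega> = n} = poisson_prob l n"
proof -
  have "{\<omega> \<in> space M. N1 \<omega> = n} = {\<omega> \<in> space M. n \<le> N1 \<omega>} - {\<omega> \<in> space M. Suc n \<le> N1 \<omega>}"
    by auto
  then have "prob {\<omega> \<in> space M. N1 \<omega> = n}
             = prob {\<omega> \<in> space M. n \<le> N1 \<omega>} - prob {\<omega> \<in> space M. Suc n \<le> N1 \<omega>}"
    by (simp add: finite_measure_Diff subset_eq)
  then show ?thesis by (simp add: prob_N1_ge)
qed

lemma prob_N1_V:
  assumes A: "A \<in> sets borel"
  shows "prob {\<omega> \<in> space M. real (N1 \<omega>) \<in> A \<and> u < V k \<omega>}
       = prob {\<omega> \<in> space M. real (N1 \<omega>) \<in> A} * laws.tail k u"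
proof -
  have "prob ((\<lambda>x. (real (N1 x), V k x)) -` (A \<times> {u<..}) \<inter> space M) =
      prob ((\<lambda>\<omega>. real (N1 \<omega>)) -` A \<inter> space M) * prob (V k -` {u<..} \<inter> space M)"
    by (rule indep_varD[OF indep_N1_V A]) simp
  then show ?thesis unfolding prob_V_gt[symmetric]
    by (simp add: vimage_def Int_def conj_commute)
qed

lemma prob_N1_eq_V: "prob {\<omega> \<in> space M. N1 \<omega> = k \<and> u < V k \<omega>} = poisson_prob l k * laws.tail k u"
  using prob_N1_V[of "{real k}" u k] prob_N1_eq[of k] by simp

lemma prob_N1_ge_V:
  "prob {\<omega> \<in> space M. k \<le> N1 \<omega> \<and> u < V k \<omega>} = (1 - (\<Sum>j<k. poisson_prob l j)) * laws.tail k u"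
  using prob_N1_V[of "{real k..}" u k] prob_N1_ge[of k] by simp


definition Den :: "real \<Rightarrow> real" where
  "Den u = prob {\<omega> \<in> space M. u < B \<omega> + compound_poisson T X 1 \<omega>}"

definition Num :: "real \<Rightarrow> real" where
  "Num u = prob {\<omega> \<in> space M. u < B \<omega> + (SUP t\<in>{0..1}. compound_poisson T X t \<omega>)}"

lemma Den_eq: "Den u = prob {\<omega> \<in> space M. u < V (N1 \<omega>) \<omega>}"
  by (simp add: Den_def compound_poisson_eq N1_def V_def)

text \<open>Conditioning on \<open>N(1)\<close>: \<open>Den(u) = \<Sum>k \<pi>_k a_k(u)\<close>.\<close>
lemma Den_sums: "(\<lambda>k. poisson_prob l k * laws.tail k u) sums Den u"
proof -
  define A where "A k = {\<omega> \<in> space M. N1 \<omega> = k \<and> u < V k \<omega>}" for k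
  have "(\<lambda>k. prob (A k)) sums prob (\<Union>k. A k)"
    by (rule finite_measure_UNION) (auto simp: A_def disjoint_family_on_def)
  moreover have "(\<Union>k. A k) = {\<omega> \<in> space M. u < V (N1 \<omega>) \<omega>}" unfolding A_def by auto
  ultimately show ?thesis unfolding A_def Den_eq prob_N1_eq_V by simp
qed

lemma Den_ge: "poisson_prob l k * laws.tail k u \<le> Den u"
proof -
  have "sum (\<lambda>k. poisson_prob l k * laws.tail k u) {k} \<le> (\<Sum>k. poisson_prob l k * laws.tail k u)"
    using Den_sums[of u] poisson_prob_pos[OF l_pos] laws.tail_nonneg
    by (intro sum_le_suminf) (auto simp: sums_iff less_imp_le)
  then show ?thesis using Den_sums[of u] by (simp add: sums_iff)
qed

lemma Den_pos: "0 < Den u"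
proof -
  have "0 < poisson_prob l 0 * laws.tail 0 u"
    using poisson_prob_pos[OF l_pos] std_normal_tail_pos[of u] by (simp add: tail_0_eq)
  also have "\<dots> \<le> Den u" by (rule Den_ge)
  finally show ?thesis .
qed

text \<open>Up to time 1, the count is bounded by \<open>N(1)\<close>, so the path takes finitely many values.\<close>
lemma poisson_count_le_N1:
  assumes "finite {n. 1 \<le> n \<and> arrival n \<omega> \<le> 1}" "t \<le> 1"
  shows "poisson_count T t \<omega> \<le> N1 \<omega>"
  unfolding poisson_count_eq N1_eq using assms by (intro card_mono) auto

lemma bdd_above_path:
  assumes "finite {n. 1 \<le> n \<and> arrival n \<omega> \<le> 1}"
  shows "bdd_above ((\<lambda>t. compound_poisson T X t \<omega>) ` {0..1})"
proof (rule bdd_above_mono)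
  show "bdd_above ((\<lambda>j. S j \<omega>) ` {..N1 \<omega>})" by (intro bdd_above_finite) auto
  show "(\<lambda>t. compound_poisson T X t \<omega>) ` {0..1} \<subseteq> (\<lambda>j. S j \<omega>) ` {..N1 \<omega>}"
    using poisson_count_le_N1[OF assms] by (auto simp: compound_poisson_eq)
qed

lemma Den_le_Num: "Den u \<le> Num u"
  unfolding Den_def Num_def
proof (rule finite_measure_mono_AE)
  show "AE x in M. x \<in> {\<omega> \<in> space M. u < B \<omega> + compound_poisson T X 1 \<omega>} \<longrightarrow>
      x \<in> {\<omega> \<in> space M. u < B \<omega> + (SUP t\<in>{0..1}. compound_poisson T X t \<omega>)}"
    using finite_arrivals_AE
  proof eventually_elim
    case (elim \<omega>)
    have "compound_poisson T X 1 \<omega> \<le> (SUP t\<in>{0..1}. compound_poisson T X t \<omega>)"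
      by (rule cSUP_upper[OF _ bdd_above_path[OF elim]]) auto
    then show ?case by auto
  qed
qed measurable

definition E :: "real \<Rightarrow> nat \<Rightarrow> 'a set" where
  "E u j = {\<omega> \<in> space M. j \<le> N1 \<omega> \<and> u < V j \<omega>}"

lemma E_meas[measurable]: "E u j \<in> events" unfolding E_def by measurable

lemma prob_E: "prob (E u j) = (1 - (\<Sum>i<j. poisson_prob l i)) * laws.tail j u"
  unfolding E_def by (rule prob_N1_ge_V)

lemma Num_le_union: "Num u \<le> prob (\<Union>j. E u j)"
  unfolding Num_def
proof (rule finite_measure_mono_AE)
  show "AE x in M. x \<in> {\<omega> \<in> space M. u < B \<omega> + (SUP t\<in>{0..1}. compound_poisson T X t \<omega>)}
                   \<longrightarrow> x \<in> (\<Union>j. E u j)"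
    using finite_arrivals_AE
  proof eventually_elim
    case (elim \<omega>)
    show ?case
    proof
      assume w: "\<omega> \<in> {\<omega> \<in> space M. u < B \<omega> + (SUP t\<in>{0..1}. compound_poisson T X t \<omega>)}"
      then have "u - B \<omega> < (SUP t\<in>{0..1}. compound_poisson T X t \<omega>)" by auto
      then obtain t where t: "t \<in> {0..1}" "u - B \<omega> < compound_poisson T X t \<omega>"
        using less_cSUP_iff[OF _ bdd_above_path[OF elim]] by auto
      define j where "j = poisson_count T t \<omega>"
      have "j \<le> N1 \<omega>" unfolding j_def using poisson_count_le_N1[OF elim] t by auto
      moreover have "u < V j \<omega>" using t unfolding j_def V_def compound_poisson_eq by auto
      ultimately show "\<omega> \<in> (\<Union>j. E u j)" using w unfolding E_def by auto
    qed
  qed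
qed measurable

lemma prob_late_events_le:
  assumes c: "0 \<le> c" and K: "\<And>j. K \<le> j \<Longrightarrow> 1 - (\<Sum>i<j. poisson_prob l i) \<le> c * poisson_prob l j"
  shows "prob (\<Union>j. E u (j + K)) \<le> c * Den u"
proof -
  have PE: "prob (E u (j + K)) \<le> c * (poisson_prob l (j + K) * laws.tail (j + K) u)" for j
    using mult_right_mono[OF K laws.tail_nonneg, of "j + K"] by (simp add: prob_E mult.assoc)
  have sD: "summable (\<lambda>k. poisson_prob l k * laws.tail k u)" using Den_sums sums_iff by blast
  have sD': "summable (\<lambda>j. poisson_prob l (j + K) * laws.tail (j + K) u)"
    using summable_ignore_initial_segment[OF sD] .
  have sE: "summable (\<lambda>j. prob (E u (j + K)))"
    by (rule summable_comparison_test'[where g="\<lambda>j. c * (poisson_prob l (j + K) * laws.tail (j + K) u)"])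
       (use PE sD' in \<open>auto intro: summable_mult\<close>)
  have "prob (\<Union>j. E u (j + K)) \<le> (\<Sum>j. prob (E u (j + K)))"
    using sE by (intro finite_measure_subadditive_countably) auto
  also have "\<dots> \<le> c * (\<Sum>j. poisson_prob l (j + K) * laws.tail (j + K) u)"
    using PE sE sD' by (simp add: suminf_mult[symmetric] suminf_le summable_mult)
  also have "(\<Sum>j. poisson_prob l (j + K) * laws.tail (j + K) u) \<le> Den u"
  proof -
    have "0 \<le> (\<Sum>k<K. poisson_prob l k * laws.tail k u)"
      using poisson_prob_pos[OF l_pos] laws.tail_nonneg
      by (intro sum_nonneg mult_nonneg_nonneg) (auto intro: less_imp_le)
    then show ?thesis
      using suminf_split_initial_segment[OF sD, of K] Den_sums[of u] by (simp add: sums_iff)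
  qed
  finally show ?thesis using c by (simp add: mult_left_mono)
qed

lemma Num_upper:
  assumes d: "\<delta> > 0"
  shows "\<exists>K. \<forall>u. Num u \<le> (\<Sum>k<K. laws.tail k u) + (1 + \<delta>) * Den u"
proof -
  obtain K where K: "\<And>j. K \<le> j \<Longrightarrow> 1 - (\<Sum>i<j. poisson_prob l i) \<le> (1 + \<delta>) * poisson_prob l j"
    using poisson_tail_le[OF l_pos d] by blast
  have "Num u \<le> (\<Sum>k<K. laws.tail k u) + (1 + \<delta>) * Den u" for u
  proof -
    have "E u j \<subseteq> (\<Union>j\<in>{..<K}. E u j) \<union> (\<Union>j. E u (j + K))" for j
    proof (cases "j < K")
      case False
      then have "E u j = E u ((j - K) + K)" by simp
      then show ?thesis by blast
    qed auto
    then have "(\<Union>j. E u j) \<subseteq> (\<Union>j\<in>{..<K}. E u j) \<union> (\<Union>j. E u (j + K))" by blast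
    then have "prob (\<Union>j. E u j) \<le> prob ((\<Union>j\<in>{..<K}. E u j) \<union> (\<Union>j. E u (j + K)))"
      by (intro finite_measure_mono) auto
    also have "\<dots> \<le> prob (\<Union>j\<in>{..<K}. E u j) + prob (\<Union>j. E u (j + K))"
      by (intro measure_Un_le) auto
    also have "prob (\<Union>j\<in>{..<K}. E u j) \<le> (\<Sum>j<K. prob (E u j))"
      by (intro finite_measure_subadditive_finite) auto
    also have "(\<Sum>j<K. prob (E u j)) \<le> (\<Sum>j<K. laws.tail j u)"
      unfolding prob_V_gt[symmetric] E_def by (intro sum_mono finite_measure_mono) auto
    also have "prob (\<Union>j. E u (j + K)) \<le> (1 + \<delta>) * Den u"
      using d K by (intro prob_late_events_le) auto
    finally show ?thesis using Num_le_union[of u] by simp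
  qed
  then show ?thesis by blast
qed

lemma tail_V_negligible:
  assumes light: "light_right_tail D" and \<epsilon>: "\<epsilon> > 0"
  shows "eventually (\<lambda>u. laws.tail k u \<le> \<epsilon> * Den u) at_top"
proof -
  have prob_D: "prob_space D" and sets_D: "sets D = sets borel"
    by (auto simp: D_def intro: prob_space_distr)
  obtain \<alpha> where \<alpha>: "\<alpha> > 0" "measure D {\<alpha><..} > 0"
    and tail: "\<forall>\<eta>>0. \<exists>s0. \<forall>y\<ge>s0. measure D {y<..} \<le> \<eta> * measure (D \<star> D) {y<..}"
    using light_right_tail_consequences[OF prob_D sets_D light] by blast
  interpret dominated_conv_powers \<mu> D "poisson_prob l" Den \<alpha>
  proof
    show "\<And>k. 0 < poisson_prob l k" by (rule poisson_prob_pos[OF l_pos])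
    show "\<And>k u. poisson_prob l k * laws.tail k u \<le> Den u" by (rule Den_ge)
    show "\<And>s. ((\<lambda>u. laws.tail 0 (u - s) / laws.tail 0 (u - s - 1)) \<longlongrightarrow> 0) at_top"
      unfolding tail_0_eq by (rule std_normal_tail_ratio)
    show "\<And>x. 0 < laws.tail 0 x" unfolding tail_0_eq by (rule std_normal_tail_pos)
  qed (use \<alpha> tail in auto)
  show ?thesis using tail_negligible[OF \<epsilon>, of k 0] by simp
qed

end


theorem corollary1:
  fixes M :: "'a measure" and l :: real
    and T :: "nat \<Rightarrow> 'a \<Rightarrow> real" and X :: "nat \<Rightarrow> 'a \<Rightarrow> real" and B :: "'a \<Rightarrow> real"
  assumes "prob_space M"
    and "l > 0"
    and "\<And>n. distributed M lborel (T n) (exponential_density l)"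
    and "\<And>k. X k \<in> borel_measurable M"
    and "\<And>k. distr M borel (X k) = distr M borel (X 0)"
    and "distributed M lborel B std_normal_density"
    and "prob_space.indep_vars M (\<lambda>_. borel) (driving_family T X B) UNIV"
    and "light_right_tail (distr M borel (X 0))"
  shows "((\<lambda>u. measure M {\<omega> \<in> space M. B \<omega> + (SUP t\<in>{0..1}. compound_poisson T X t \<omega>) > u}
              / measure M {\<omega> \<in> space M. B \<omega> + compound_poisson T X 1 \<omega> > u})
          \<longlongrightarrow> 1) at_top"
proof -
  interpret compound_poisson_setting M l T X B
    using assms by (intro compound_poisson_setting.intro compound_poisson_setting_axioms.intro) auto
  have light: "light_right_tail D" using assms(8) by (simp add: D_def)
  have "((\<lambda>u. Num u / Den u) \<longlongrightarrow> 1) at_top"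
    by (rule ratio_tendsto_one[OF Den_pos Den_le_Num tail_V_negligible[OF light] Num_upper])
  then show ?thesis unfolding Num_def Den_def .
qed

end
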